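(* (SEM-ME) Let $M$ be a canonical linear SEM-ME satisfying SEM-ME faithfulness part (a). Then every model in the AOG equivalence class of $M$ satisfies SEM-ME faithfulness part (a), and every canonical SEM-ME whose mixing matrix equals $\mathbf W^{ME}(M)$ up to permutation and nonzero scaling of columns and which satisfies part (a) belongs to the AOG equivalence class of $M$. Hence, under separability and part (a), $M$ is identifiable exactly up to its AOG equivalence class. (SEM-UR) The analogous statement holds for a linear SEM-UR satisfying SEM-UR faithfulness part (a) and its AOG equivalence class.
   Context: Linear SEM-ME (canonical form): underlying variables $V_1,\dots,V_p$ partitioned into unobserved $\mathcal Z$ and observed $\mathcal Y$, $V_i=\sum_{V_j\in Pa(V_i)}c_{ij}V_j+N_{V_i}$ over a DAG (edge $V_j\to V_i$ of weight $c_{ij}$ iff $c_{ij}\ne0$), measurements $U_i=Z_i+N_{U_i}$, independent noises. A u-leaf node is a $Z$-variable with no children; all others are nu-leaf nodes; in canonical form u-leaf nodes have zero noise and nu-leaf nodes nondegenerate noise. A model is specified by its weighted DAG on the underlying variables and its set of u-leaf nodes. The mixing matrix $\mathbf W^{ME}$ has rows indexed by underlying variables, columns by noise terms $N_{V'}$ of nu-leaf nodes, $(V,N_{V'})$ entry = total causal effect of $V'$ on $V$ (sum over directed paths of products of weights; $1$ if $V=V'$). Linear SEM-UR: $H=N_H$, $X=\mathbf BH+\mathbf AX+N_X$ with $\mathbf A$ strictly lower triangular, independent noises; diagram: edges $H_i\to X_j$ iff $b_{ji}\ne0$, $X_k\to X_j$ iff $a_{jk}\ne0$; mixing matrix $\mathbf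 W^{UR}=[(\mathbf I-\mathbf A)^{-1}\mathbf B\;\;(\mathbf I-\mathbf A)^{-1}]$, rows indexed by observed variables, columns by noise terms. Separability: the mixing matrix can be recovered from the distribution of the observed variables up to permutation and nonzero scaling of its columns. Faithfulness part (a): SEM-ME: the total causal effect of any underlying variable on any of its descendants is nonzero. SEM-UR: the total causal effect of any observed or latent variable on any of its descendants is nonzero. Ancestral ordered grouping (AOG). SEM-ME: each nu-leaf node in its own group; each u-leaf node $Z_j$ goes into the group of a parent $V_i$ if $Z_j$ has no other parents or all its other parents are ancestors of $V_i$, else into a singleton group. SEM-UR: each observed variable in its own group; each latent $H_j$ goes into the group of a child $X_i$ if $H_j$ has no other children or all its other children are descendants of $X_i$, else into a singleton group. AOG equivalence class of $M$: the set of models (canonical SEM-ME on the same underlying variables; resp. SEM-UR on the same observed variables with the same number of latent variables) whose mixing matrix equals that of $M$ up to permutation and nonzero scaling of columns and whose AOG partition coincides with that of $M$ (for SEM-UR, up to relabeling latent variables). *)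

theory Defs
  imports "HOL-Analysis.Analysis"
begin

definition wedges :: "'v set \<Rightarrow> ('v \<Rightarrow> 'v \<Rightarrow> real) \<Rightarrow> ('v \<times> 'v) set" where
  "wedges V w = {(u, v). u \<in> V \<and> v \<in> V \<and> w u v \<noteq> 0}"

definition is_dpath :: "'v set \<Rightarrow> ('v \<Rightarrow> 'v \<Rightarrow> real) \<Rightarrow> 'v list \<Rightarrow> bool" where
  "is_dpath V w xs \<longleftrightarrow> xs \<noteq> [] \<and> set xs \<subseteq> V \<and> distinct xs \<and>
     (\<forall>i. Suc i < length xs \<longrightarrow> w (xs ! i) (xs ! Suc i) \<noteq> 0)"

definition path_weight :: "('v \<Rightarrow> 'v \<Rightarrow> real) \<Rightarrow> 'v list \<Rightarrow> real" where
  "path_weight w xs = (\<Prod>i<length xs - 1. w (xs ! i) (xs ! Suc i))"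

text \<open>Total causal effect of a on b: sum over directed paths from a to b of the
  product of edge weights (equals 1 for a = b in a DAG: the trivial path).\<close>
definition total_effect :: "'v set \<Rightarrow> ('v \<Rightarrow> 'v \<Rightarrow> real) \<Rightarrow> 'v \<Rightarrow> 'v \<Rightarrow> real" where
  "total_effect V w a b =
     (\<Sum>xs \<in> {xs. is_dpath V w xs \<and> hd xs = a \<and> last xs = b}. path_weight w xs)"

definition faithful_a :: "'v set \<Rightarrow> ('v \<Rightarrow> 'v \<Rightarrow> real) \<Rightarrow> bool" where
  "faithful_a V w \<longleftrightarrow> (\<forall>a b. (a, b) \<in> (wedges V w)\<^sup>+ \<longrightarrow> total_effect V w a b \<noteq> 0)"

text \<open>Underlying variables V_0..V_(p-1) (indices < p); Z is the set of indices of
  unobserved variables; c i j is the weight c_ij of the edge V_j -> V_i.\<close>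

definition me_w :: "(nat \<Rightarrow> nat \<Rightarrow> real) \<Rightarrow> nat \<Rightarrow> nat \<Rightarrow> real" where
  "me_w c u v = c v u"

definition sem_me :: "nat \<Rightarrow> nat set \<Rightarrow> (nat \<Rightarrow> nat \<Rightarrow> real) \<Rightarrow> bool" where
  "sem_me p Z c \<longleftrightarrow> Z \<subseteq> {..<p} \<and> acyclic (wedges {..<p} (me_w c))"

definition me_parents :: "nat \<Rightarrow> (nat \<Rightarrow> nat \<Rightarrow> real) \<Rightarrow> nat \<Rightarrow> nat set" where
  "me_parents p c i = {j. j < p \<and> c i j \<noteq> 0}"

definition me_children :: "nat \<Rightarrow> (nat \<Rightarrow> nat \<Rightarrow> real) \<Rightarrow> nat \<Rightarrow> nat set" where
  "me_children p c j = {i. i < p \<and> c i j \<noteq> 0}"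

definition me_anc :: "nat \<Rightarrow> (nat \<Rightarrow> nat \<Rightarrow> real) \<Rightarrow> nat \<Rightarrow> nat \<Rightarrow> bool" where
  "me_anc p c k i \<longleftrightarrow> (k, i) \<in> (wedges {..<p} (me_w c))\<^sup>+"

definition u_leaf :: "nat \<Rightarrow> nat set \<Rightarrow> (nat \<Rightarrow> nat \<Rightarrow> real) \<Rightarrow> nat \<Rightarrow> bool" where
  "u_leaf p Z c j \<longleftrightarrow> j \<in> Z \<and> me_children p c j = {}"

definition nu_leaves :: "nat \<Rightarrow> nat set \<Rightarrow> (nat \<Rightarrow> nat \<Rightarrow> real) \<Rightarrow> nat set" where
  "nu_leaves p Z c = {j. j < p \<and> \<not> u_leaf p Z c j}"

text \<open>Mixing matrix W^ME: entry (V_v, N_{V_j}) = total causal effect of V_j on V_v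
  (rows v < p, columns j in the nu-leaf nodes).\<close>
definition me_mix :: "nat \<Rightarrow> (nat \<Rightarrow> nat \<Rightarrow> real) \<Rightarrow> nat \<Rightarrow> nat \<Rightarrow> real" where
  "me_mix p c v j = total_effect {..<p} (me_w c) j v"

definition me_faithful :: "nat \<Rightarrow> (nat \<Rightarrow> nat \<Rightarrow> real) \<Rightarrow> bool" where
  "me_faithful p c \<longleftrightarrow> faithful_a {..<p} (me_w c)"

definition me_mix_equiv ::
  "nat \<Rightarrow> nat set \<Rightarrow> (nat \<Rightarrow> nat \<Rightarrow> real) \<Rightarrow> (nat \<Rightarrow> nat \<Rightarrow> real) \<Rightarrow> bool" where
  "me_mix_equiv p Z c c' \<longleftrightarrow>
     (\<exists>\<sigma> (l :: nat \<Rightarrow> real). bij_betw \<sigma> (nu_leaves p Z c) (nu_leaves p Z c') \<and>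
        (\<forall>j \<in> nu_leaves p Z c. l j \<noteq> 0) \<and>
        (\<forall>v < p. \<forall>j \<in> nu_leaves p Z c. me_mix p c' v (\<sigma> j) = l j * me_mix p c v j))"

definition me_aog_parent :: "nat \<Rightarrow> (nat \<Rightarrow> nat \<Rightarrow> real) \<Rightarrow> nat \<Rightarrow> nat \<Rightarrow> bool" where
  "me_aog_parent p c j i \<longleftrightarrow>
     i \<in> me_parents p c j \<and> (\<forall>k \<in> me_parents p c j. k \<noteq> i \<longrightarrow> me_anc p c k i)"

definition me_aog :: "nat \<Rightarrow> nat set \<Rightarrow> (nat \<Rightarrow> nat \<Rightarrow> real) \<Rightarrow> nat set set" where
  "me_aog p Z c =
     {insert i {j. u_leaf p Z c j \<and> me_aog_parent p c j i} | i. i \<in> nu_leaves p Z c}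
     \<union> {{j} | j. u_leaf p Z c j \<and> \<not> (\<exists>i. me_aog_parent p c j i)}"

definition me_aog_class :: "nat \<Rightarrow> nat set \<Rightarrow> (nat \<Rightarrow> nat \<Rightarrow> real) \<Rightarrow> (nat \<Rightarrow> nat \<Rightarrow> real) set" where
  "me_aog_class p Z c =
     {c'. sem_me p Z c' \<and> me_mix_equiv p Z c c' \<and> me_aog p Z c' = me_aog p Z c}"

text \<open>Latent variables indexed by the finite type 'h, observed variables by the finite
  type 'x. Diagram vertices: Inl h (latent H_h) and Inr x (observed X_x).\<close>

definition ur_w :: "real^'x^'x \<Rightarrow> real^'h^'x \<Rightarrow> ('h + 'x) \<Rightarrow> ('h + 'x) \<Rightarrow> real" where
  "ur_w A B u v = (case (u, v) of
       (Inl h, Inr j) \<Rightarrow> B $ j $ h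
     | (Inr k, Inr j) \<Rightarrow> A $ j $ k
     | _ \<Rightarrow> 0)"

definition sem_ur :: "real^'x^'x \<Rightarrow> bool" where
  "sem_ur A \<longleftrightarrow> (\<exists>ord :: 'x \<Rightarrow> nat. inj ord \<and> (\<forall>j k. A $ j $ k \<noteq> 0 \<longrightarrow> ord k < ord j))"

definition ur_mix :: "real^'x^'x \<Rightarrow> real^'h^'x \<Rightarrow> 'x \<Rightarrow> ('h + 'x) \<Rightarrow> real" where
  "ur_mix A B i col = (case col of
       Inl h \<Rightarrow> (matrix_inv (mat 1 - A) ** B) $ i $ h
     | Inr k \<Rightarrow> matrix_inv (mat 1 - A) $ i $ k)"

definition ur_faithful :: "real^'x^'x \<Rightarrow> real^'h^'x \<Rightarrow> bool" where
  "ur_faithful A B \<longleftrightarrow> faithful_a UNIV (ur_w A B)"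

definition ur_mix_equiv :: "real^'x^'x \<Rightarrow> real^'h^'x \<Rightarrow> real^'x^'x \<Rightarrow> real^'h^'x \<Rightarrow> bool" where
  "ur_mix_equiv A B A' B' \<longleftrightarrow>
     (\<exists>(\<sigma> :: 'h + 'x \<Rightarrow> 'h + 'x) (l :: 'h + 'x \<Rightarrow> real). bij \<sigma> \<and> (\<forall>col. l col \<noteq> 0) \<and>
        (\<forall>i col. ur_mix A' B' i (\<sigma> col) = l col * ur_mix A B i col))"

definition ur_desc :: "real^'x^'x \<Rightarrow> real^'h^'x \<Rightarrow> ('h + 'x) \<Rightarrow> ('h + 'x) \<Rightarrow> bool" where
  "ur_desc A B u v \<longleftrightarrow> (u, v) \<in> (wedges UNIV (ur_w A B))\<^sup>+"

definition ur_children :: "real^'h^'x \<Rightarrow> 'h \<Rightarrow> 'x set" where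
  "ur_children B h = {i. B $ i $ h \<noteq> 0}"

definition ur_aog_child :: "real^'x^'x \<Rightarrow> real^'h^'x \<Rightarrow> 'h \<Rightarrow> 'x \<Rightarrow> bool" where
  "ur_aog_child A B h i \<longleftrightarrow>
     i \<in> ur_children B h \<and> (\<forall>k \<in> ur_children B h. k \<noteq> i \<longrightarrow> ur_desc A B (Inr i) (Inr k))"

definition ur_aog :: "real^'x^'x \<Rightarrow> real^'h^'x \<Rightarrow> ('h + 'x) set set" where
  "ur_aog A B =
     {insert (Inr i) {Inl h | h. ur_aog_child A B h i} | i. True}
     \<union> {{Inl h} | h. \<not> (\<exists>i. ur_aog_child A B h i)}"

definition ur_aog_class :: "real^'x^'x \<Rightarrow> real^'h^'x \<Rightarrow> ((real^'x^'x) \<times> (real^'h^'x)) set" where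
  "ur_aog_class A B =
     {(A', B'). sem_ur A' \<and> ur_mix_equiv A B A' B' \<and>
        (\<exists>\<pi> :: 'h \<Rightarrow> 'h. bij \<pi> \<and> ur_aog A' B' = (\<lambda>G. map_sum \<pi> id ` G) ` ur_aog A B)}"

end

theory Submission
  imports Defs
begin

text \<open>
  Entries of both mixing matrices are total effects, i.e.\ sums of path weights, and on a finite
  DAG faithfulness (a) holds iff nonzero total effects compose. Hence, in a faithful model, the
  support of the row of \<open>W\<^sup>M\<^sup>E\<close> belonging to a variable consists of its nu-leaf ancestors
  (and itself, if it is a nu-leaf), the support of the column of \<open>W\<^sup>U\<^sup>R\<close> belonging to a
  noise term consists of the observed descendants, and a u-leaf (latent) variable joins the AOG
  group of a nu-leaf (observed) variable iff their supports coincide. A column permutation \<open>\<sigma>\<close>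
  realising mixing equivalence transports supports. If the second model is faithful as well,
  \<open>\<sigma>\<close> only exchanges columns of equal support, so the AOG partitions agree. Conversely, if the
  partitions agree, a column moved by \<open>\<sigma>\<close> stays inside its AOG group; then nonzero total
  effects of the second model compose again, and faithfulness follows by induction along the DAG.
  For SEM-UR this needs an infinite descent: a latent column sent by \<open>\<sigma>\<close> to an observed column
  of different support forces, by counting the latent members of AOG groups, another such pair
  strictly further down the graph.
\<close>

section \<open>Directed paths and total effects\<close>

lemma is_dpath_iff_successively:
  "is_dpath V w xs \<longleftrightarrow>
     xs \<noteq> [] \<and> set xs \<subseteq> V \<and> distinct xs \<and> successively (\<lambda>u v. w u v \<noteq> 0) xs"
proof -
  have "successively P xs \<longleftrightarrow> (\<forall>i. Suc i < length xs \<longrightarrow> P (xs ! i) (xs ! Suc i))" for P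
    by (induction P xs rule: successively.induct) (auto simp: nth_Cons split: nat.splits)
  then show ?thesis by (simp add: is_dpath_def)
qed

lemma is_dpath_Cons_Cons:
  "is_dpath V w (x # y # ys) \<longleftrightarrow>
     x \<in> V \<and> x \<notin> set (y # ys) \<and> w x y \<noteq> 0 \<and> is_dpath V w (y # ys)"
  by (auto simp: is_dpath_iff_successively)

lemma path_weight_Cons_Cons: "path_weight w (x # y # ys) = w x y * path_weight w (y # ys)"
  unfolding path_weight_def by (simp only: length_Cons diff_Suc_1 prod.lessThan_Suc_shift) simp

lemma dpath_hd_rtrancl:
  "is_dpath V w xs \<Longrightarrow> z \<in> set xs \<Longrightarrow> (hd xs, z) \<in> (wedges V w)\<^sup>*"
proof (induction xs rule: induct_list012)
  case (3 x y ys)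
  then have "x \<in> V" "w x y \<noteq> 0" and tl: "is_dpath V w (y # ys)"
    by (simp_all add: is_dpath_Cons_Cons)
  then have "(x, y) \<in> wedges V w" by (simp add: wedges_def is_dpath_def)
  moreover have "z = x \<or> (y, z) \<in> (wedges V w)\<^sup>*"
    using "3.IH"(2)[OF tl] "3.prems"(2) by auto
  ultimately show ?case by (auto intro: converse_rtrancl_into_rtrancl)
qed simp_all

lemma acyclic_dpath_Cons:
  assumes "acyclic (wedges V w)" "a \<in> V" "w a m \<noteq> 0" "is_dpath V w ys" "hd ys = m"
  shows "is_dpath V w (a # ys)"
proof -
  obtain zs where ys: "ys = m # zs" using assms(4,5) by (cases ys) (auto simp: is_dpath_def)
  have "(a, m) \<in> wedges V w" using assms ys by (auto simp: wedges_def is_dpath_def)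
  then have "(m, a) \<notin> (wedges V w)\<^sup>*"
    using assms(1) by (meson acyclic_def rtrancl_into_trancl2)
  then have "a \<notin> set ys" using dpath_hd_rtrancl[OF assms(4)] assms(5) by blast
  then show ?thesis using assms ys by (simp add: is_dpath_Cons_Cons)
qed

definition dpaths :: "'v set \<Rightarrow> ('v \<Rightarrow> 'v \<Rightarrow> real) \<Rightarrow> 'v \<Rightarrow> 'v \<Rightarrow> 'v list set" where
  "dpaths V w a b = {xs. is_dpath V w xs \<and> hd xs = a \<and> last xs = b}"

lemma total_effect_eq_sum_dpaths:
  "total_effect V w a b = (\<Sum>xs\<in>dpaths V w a b. path_weight w xs)"
  by (simp add: total_effect_def dpaths_def)

lemma finite_dpaths: "finite V \<Longrightarrow> finite (dpaths V w a b)"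
  by (rule finite_subset[OF _ finite_subset_distinct[of V]]) (auto simp: dpaths_def is_dpath_def)

lemma total_effect_nonzero_obtains_dpath:
  assumes "total_effect V w a b \<noteq> 0"
  obtains xs where "is_dpath V w xs" "hd xs = a" "last xs = b"
proof -
  obtain xs where "xs \<in> dpaths V w a b"
    using assms unfolding total_effect_eq_sum_dpaths by (meson sum.neutral)
  then show ?thesis using that unfolding dpaths_def by blast
qed

lemma total_effect_nonzero_imp_in_V:
  assumes "total_effect V w a b \<noteq> 0" shows "a \<in> V" "b \<in> V"
proof -
  obtain xs where "is_dpath V w xs" "hd xs = a" "last xs = b"
    using assms by (rule total_effect_nonzero_obtains_dpath)
  then show "a \<in> V" "b \<in> V"
    using hd_in_set[of xs] last_in_set[of xs] by (auto simp: is_dpath_def)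
qed

lemma total_effect_nonzero_imp_trancl:
  assumes "total_effect V w a b \<noteq> 0" "a \<noteq> b" shows "(a, b) \<in> (wedges V w)\<^sup>+"
proof -
  obtain xs where xs: "is_dpath V w xs" "hd xs = a" "last xs = b"
    using assms(1) by (rule total_effect_nonzero_obtains_dpath)
  then have "(a, b) \<in> (wedges V w)\<^sup>*"
    using dpath_hd_rtrancl[of V w xs b] last_in_set[of xs] by (simp add: is_dpath_def)
  then show ?thesis using assms(2) by (simp add: rtrancl_eq_or_trancl)
qed

lemma distinct_hd_eq_last_imp_singleton:
  assumes "distinct xs" "xs \<noteq> []" "hd xs = last xs" shows "xs = [hd xs]"
  using assms by (cases xs) (auto split: if_splits)

lemma total_effect_self: "a \<in> V \<Longrightarrow> total_effect V w a a = 1"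
proof -
  assume "a \<in> V"
  moreover have "xs = [a]" if "xs \<in> dpaths V w a a" for xs
    using that distinct_hd_eq_last_imp_singleton[of xs] by (auto simp: dpaths_def is_dpath_def)
  ultimately have "dpaths V w a a = {[a]}" by (auto simp: dpaths_def is_dpath_iff_successively)
  then show ?thesis by (simp add: total_effect_eq_sum_dpaths path_weight_def)
qed

lemma total_effect_first_step:
  assumes "finite V" "acyclic (wedges V w)" "a \<in> V" "a \<noteq> b"
  shows "total_effect V w a b = (\<Sum>m\<in>V. w a m * total_effect V w m b)"
proof -
  define S where "S = Sigma {m \<in> V. w a m \<noteq> 0} (\<lambda>m. dpaths V w m b)"
  have "total_effect V w a b = (\<Sum>xs\<in>dpaths V w a b. path_weight w xs)"
    by (rule total_effect_eq_sum_dpaths)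
  also have "\<dots> = (\<Sum>(m, ys)\<in>S. w a m * path_weight w ys)"
  proof (rule sum.reindex_bij_witness[where j = "\<lambda>xs. (hd (tl xs), tl xs)"
        and i = "\<lambda>(m, ys). a # ys"])
    fix xs assume "xs \<in> dpaths V w a b"
    then have xs: "is_dpath V w xs" "hd xs = a" "last xs = b" by (auto simp: dpaths_def)
    then obtain t where "xs = a # t" by (cases xs) (auto simp: is_dpath_def)
    then obtain y ys where "xs = a # y # ys" using xs assms(4) by (cases t) auto
    then show "(hd (tl xs), tl xs) \<in> S" "(case (hd (tl xs), tl xs) of (m, ys) \<Rightarrow> a # ys) = xs"
      "(case (hd (tl xs), tl xs) of (m, ys) \<Rightarrow> w a m * path_weight w ys) = path_weight w xs"
      using xs by (auto simp: S_def dpaths_def is_dpath_Cons_Cons is_dpath_iff_successively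
          path_weight_Cons_Cons)
  next
    fix mys assume "mys \<in> S"
    then obtain m ys where
      mys: "mys = (m, ys)" "w a m \<noteq> 0" "is_dpath V w ys" "hd ys = m" "last ys = b"
      by (auto simp: S_def dpaths_def)
    then obtain zs where ys: "ys = m # zs" by (cases ys) (auto simp: is_dpath_def)
    show "(hd (tl (case mys of (m, ys) \<Rightarrow> a # ys)), tl (case mys of (m, ys) \<Rightarrow> a # ys)) = mys"
      using mys ys by simp
    show "(case mys of (m, ys) \<Rightarrow> a # ys) \<in> dpaths V w a b"
      using mys ys acyclic_dpath_Cons[OF assms(2,3) mys(2,3,4)] by (simp add: dpaths_def)
  qed
  also have "\<dots> = (\<Sum>m\<in>{m \<in> V. w a m \<noteq> 0}. w a m * total_effect V w m b)"
    unfolding S_def total_effect_eq_sum_dpaths sum_distrib_left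
    by (rule sum.Sigma[symmetric]) (auto simp: assms(1) finite_dpaths)
  also have "\<dots> = (\<Sum>m\<in>V. w a m * total_effect V w m b)"
    by (rule sum.mono_neutral_left) (auto simp: assms(1))
  finally show ?thesis .
qed

definition converse_weights :: "('v \<Rightarrow> 'v \<Rightarrow> real) \<Rightarrow> 'v \<Rightarrow> 'v \<Rightarrow> real" where
  "converse_weights w u v = w v u"

lemma converse_weights_converse_weights [simp]: "converse_weights (converse_weights w) = w"
  by (simp add: converse_weights_def fun_eq_iff)

lemma wedges_converse_weights: "wedges V (converse_weights w) = (wedges V w)\<inverse>"
  by (auto simp: wedges_def converse_weights_def)

lemma is_dpath_rev: "is_dpath V (converse_weights w) (rev xs) \<longleftrightarrow> is_dpath V w xs"
  by (simp add: is_dpath_iff_successively converse_weights_def)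

lemma path_weight_rev: "path_weight (converse_weights w) (rev xs) = path_weight w xs"
proof -
  let ?n = "length xs"
  have "path_weight (converse_weights w) (rev xs)
      = (\<Prod>i<?n - 1. w (xs ! (?n - 1 - Suc i)) (xs ! Suc (?n - 1 - Suc i)))"
    unfolding path_weight_def
    by (intro prod.cong) (auto simp: rev_nth Suc_diff_Suc converse_weights_def)
  also have "\<dots> = path_weight w xs"
    unfolding path_weight_def by (rule prod.nat_diff_reindex)
  finally show ?thesis .
qed

lemma dpaths_converse_weights: "dpaths V (converse_weights w) b a = rev ` dpaths V w a b"
proof -
  have rev_sub: "rev ` dpaths V w' a' b' \<subseteq> dpaths V (converse_weights w') b' a'" for w' a' b'
    by (auto simp: dpaths_def is_dpath_rev hd_rev last_rev)
  have "dpaths V (converse_weights w) b a \<subseteq> rev ` dpaths V w a b"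
    using rev_sub[of "converse_weights w" b a] by (force simp: image_subset_iff)
  then show ?thesis using rev_sub[of w a b] by blast
qed

lemma total_effect_converse_weights:
  "total_effect V (converse_weights w) b a = total_effect V w a b"
  unfolding total_effect_eq_sum_dpaths dpaths_converse_weights
  by (simp add: sum.reindex inj_on_def path_weight_rev)

lemma acyclic_wedges_irrefl: "acyclic (wedges V w) \<Longrightarrow> (a, b) \<in> wedges V w \<Longrightarrow> a \<noteq> b"
  by (auto simp: acyclic_def)

lemma wedge_total_effect_via_successor:
  assumes "finite V" "acyclic (wedges V w)" "(a, b) \<in> wedges V w"
  shows "\<exists>x. (x = a \<or> (a, x) \<in> wedges V w) \<and> x \<noteq> b \<and> total_effect V w x b \<noteq> 0"
proof (cases "total_effect V w a b = 0")
  case True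
  have ab: "a \<in> V" "b \<in> V" "w a b \<noteq> 0" "a \<noteq> b"
    using assms(3) acyclic_wedges_irrefl[OF assms(2,3)] by (auto simp: wedges_def)
  have "0 = (\<Sum>m\<in>V. w a m * total_effect V w m b)"
    using total_effect_first_step[OF assms(1,2) ab(1,4)] True by simp
  also have "\<dots> = w a b + (\<Sum>m\<in>V - {b}. w a m * total_effect V w m b)"
    using assms(1) ab(2) by (simp add: sum.remove total_effect_self)
  finally have "(\<Sum>m\<in>V - {b}. w a m * total_effect V w m b) \<noteq> 0" using ab(3) by auto
  then obtain m where "m \<in> V - {b}" "w a m * total_effect V w m b \<noteq> 0"
    using sum.not_neutral_contains_not_neutral by blast
  then show ?thesis using ab(1) by (auto simp: wedges_def)
next
  case False
  then show ?thesis using acyclic_wedges_irrefl[OF assms(2,3)] by blast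
qed

lemma wedge_total_effect_via_predecessor:
  assumes "finite V" "acyclic (wedges V w)" "(a, b) \<in> wedges V w"
  shows "\<exists>x. (x = b \<or> (x, b) \<in> wedges V w) \<and> x \<noteq> a \<and> total_effect V w a x \<noteq> 0"
proof -
  have "acyclic (wedges V (converse_weights w))" "(b, a) \<in> wedges V (converse_weights w)"
    using assms(2,3) by (simp_all add: wedges_converse_weights)
  from wedge_total_effect_via_successor[OF assms(1) this] show ?thesis
    by (simp add: total_effect_converse_weights wedges_converse_weights)
qed

section \<open>Faithfulness as transitivity of nonzero total effects\<close>

lemma faithful_a_total_effect_trans:
  assumes "faithful_a V w" "total_effect V w a b \<noteq> 0" "total_effect V w b c \<noteq> 0"
  shows "total_effect V w a c \<noteq> 0"
proof (cases "a = b \<or> b = c \<or> a = c")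
  case True
  then show ?thesis
    using assms(2,3) total_effect_nonzero_imp_in_V(1)[OF assms(2)] by (auto simp: total_effect_self)
next
  case False
  then have "(a, c) \<in> (wedges V w)\<^sup>+"
    using assms(2,3) total_effect_nonzero_imp_trancl by (meson trancl_trans)
  then show ?thesis using assms(1) by (simp add: faithful_a_def)
qed

lemma faithful_aI:
  assumes fin: "finite V" and ac: "acyclic (wedges V w)"
    and trans: "\<And>a b c. total_effect V w a b \<noteq> 0 \<Longrightarrow> total_effect V w b c \<noteq> 0 \<Longrightarrow>
      total_effect V w a c \<noteq> 0"
  shows "faithful_a V w"
proof -
  let ?E = "wedges V w" and ?T = "total_effect V w"
  have wf: "wf (?E\<^sup>+)"
    using fin ac
    by (auto intro: wf_trancl finite_acyclic_wf finite_subset[of _ "V \<times> V"] simp: wedges_def)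
  txt \<open>If an edge \<open>a \<rightarrow> b\<close> had zero effect, some other successor \<open>m\<close> of \<open>a\<close> would have
    \<open>T m b \<noteq> 0\<close>; the edge \<open>a \<rightarrow> m\<close> lies below \<open>b\<close>, so transitivity gives a contradiction.\<close>
  have edge: "\<forall>a. (a, b) \<in> ?E \<longrightarrow> ?T a b \<noteq> 0" for b
  proof (induction b rule: wf_induct[OF wf])
    case (1 b)
    show ?case
    proof (intro allI impI notI)
      fix a assume ab: "(a, b) \<in> ?E" and zero: "?T a b = 0"
      obtain m where m: "m = a \<or> (a, m) \<in> ?E" "m \<noteq> b" "?T m b \<noteq> 0"
        using wedge_total_effect_via_successor[OF fin ac ab] by blast
      then have "(a, m) \<in> ?E" using zero by blast
      moreover have "(m, b) \<in> ?E\<^sup>+" using total_effect_nonzero_imp_trancl[OF m(3,2)] .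
      ultimately have "?T a m \<noteq> 0" using "1.IH" by blast
      then show False using trans[OF _ m(3)] zero by blast
    qed
  qed
  show ?thesis unfolding faithful_a_def
  proof (intro allI impI)
    fix a b assume "(a, b) \<in> ?E\<^sup>+"
    then show "?T a b \<noteq> 0"
    proof (induction rule: trancl_induct)
      case (step b c)
      then show ?case using trans[OF step.IH] edge by blast
    qed (use edge in blast)
  qed
qed

section \<open>SEM-ME: row supports of the mixing matrix\<close>

lemma me_wedges_iff: "(u, v) \<in> wedges {..<p} (me_w c) \<longleftrightarrow> u < p \<and> v < p \<and> c v u \<noteq> 0"
  by (simp add: wedges_def me_w_def)

lemma nu_leaves_iff: "j \<in> nu_leaves p Z c \<longleftrightarrow> j < p \<and> \<not> u_leaf p Z c j"
  by (simp add: nu_leaves_def)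

lemma wedges_source_in_nu_leaves: "(x, y) \<in> wedges {..<p} (me_w c) \<Longrightarrow> x \<in> nu_leaves p Z c"
  by (auto simp: me_wedges_iff nu_leaves_iff u_leaf_def me_children_def)

lemma ancestor_in_nu_leaves: "me_anc p c x y \<Longrightarrow> x \<in> nu_leaves p Z c"
  unfolding me_anc_def by (erule converse_tranclE) (auto intro: wedges_source_in_nu_leaves)

lemma total_effect_source_in_nu_leaves:
  "total_effect {..<p} (me_w c) x y \<noteq> 0 \<Longrightarrow> x \<noteq> y \<Longrightarrow> x \<in> nu_leaves p Z c"
  using ancestor_in_nu_leaves total_effect_nonzero_imp_trancl unfolding me_anc_def by metis

lemma me_aog_parentI:
  assumes "acyclic (wedges {..<p} (me_w c))" "me_anc p c i x"
    and "\<And>z. (z, x) \<in> wedges {..<p} (me_w c) \<Longrightarrow> z \<noteq> i \<Longrightarrow> me_anc p c z i"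
  shows "me_aog_parent p c x i"
proof -
  let ?E = "wedges {..<p} (me_w c)"
  have "(i, x) \<in> ?E"
    using assms(2) unfolding me_anc_def
  proof (cases rule: tranclE)
    case (step z)
    then have "(i, i) \<in> ?E\<^sup>+"
      using assms(3)[of z] by (cases "z = i") (auto simp: me_anc_def)
    then show ?thesis using assms(1) by (simp add: acyclic_def)
  qed
  then show ?thesis
    using assms(3) by (auto simp: me_aog_parent_def me_parents_def me_wedges_iff)
qed

lemma me_aog_parent_ancestors:
  assumes "me_aog_parent p c x i" "x < p"
  shows "{k. me_anc p c k x} = insert i {k. me_anc p c k i}"
proof -
  let ?E = "wedges {..<p} (me_w c)"
  have ix: "(i, x) \<in> ?E" and parent: "\<And>k. (k, x) \<in> ?E \<Longrightarrow> k = i \<or> (k, i) \<in> ?E\<^sup>+"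
    using assms by (auto simp: me_aog_parent_def me_parents_def me_anc_def me_wedges_iff)
  have "k = i \<or> (k, i) \<in> ?E\<^sup>+" if "(k, x) \<in> ?E\<^sup>+" for k
    using that by (cases rule: tranclE) (auto dest: parent intro: trancl_trans)
  then show ?thesis using ix by (auto simp: me_anc_def)
qed

lemma me_aog_parent_in_nu_leaves: "me_aog_parent p c x i \<Longrightarrow> x < p \<Longrightarrow> i \<in> nu_leaves p Z c"
  by (auto simp: me_aog_parent_def me_parents_def me_wedges_iff
      intro!: wedges_source_in_nu_leaves[of i x])

definition me_row_support :: "nat \<Rightarrow> nat set \<Rightarrow> (nat \<Rightarrow> nat \<Rightarrow> real) \<Rightarrow> nat \<Rightarrow> nat set" where
  "me_row_support p Z c v = {j \<in> nu_leaves p Z c. me_mix p c v j \<noteq> 0}"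

locale me_faithful_model =
  fixes p :: nat and Z :: "nat set" and c :: "nat \<Rightarrow> nat \<Rightarrow> real"
  assumes sem_me: "sem_me p Z c" and faithful: "me_faithful p c"
begin

abbreviation "E \<equiv> wedges {..<p} (me_w c)"
abbreviation "T \<equiv> total_effect {..<p} (me_w c)"
abbreviation "N \<equiv> nu_leaves p Z c"
abbreviation "S \<equiv> me_row_support p Z c"

lemma acyclic_E: "acyclic E"
  using sem_me by (simp add: sem_me_def)

lemma total_effect_trans: "T a b \<noteq> 0 \<Longrightarrow> T b d \<noteq> 0 \<Longrightarrow> T a d \<noteq> 0"
  using faithful faithful_a_total_effect_trans[of "{..<p}" "me_w c" a b d]
  unfolding me_faithful_def by blast

lemma total_effect_nonzero_iff_ancestor: "k \<noteq> v \<Longrightarrow> T k v \<noteq> 0 \<longleftrightarrow> me_anc p c k v"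
  using faithful total_effect_nonzero_imp_trancl[of "{..<p}" "me_w c" k v]
  unfolding me_faithful_def faithful_a_def me_anc_def by blast

lemma row_support_eq: "S v = {k \<in> N. T k v \<noteq> 0}"
  by (simp add: me_row_support_def me_mix_def)

lemma row_support_u_leaf:
  assumes "u_leaf p Z c x" shows "S x = {k. me_anc p c k x}"
proof -
  have "k \<in> N \<and> T k x \<noteq> 0 \<longleftrightarrow> me_anc p c k x" for k
    using assms total_effect_nonzero_iff_ancestor[of k x] ancestor_in_nu_leaves[of p c k x Z]
    by (auto simp: nu_leaves_iff)
  then show ?thesis unfolding row_support_eq by blast
qed

lemma row_support_nu_leaf:
  assumes "i \<in> N" shows "S i = insert i {k. me_anc p c k i}"
proof -
  have "k \<in> N \<and> T k i \<noteq> 0 \<longleftrightarrow> k = i \<or> me_anc p c k i" for k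
    using assms total_effect_nonzero_iff_ancestor[of k i] ancestor_in_nu_leaves[of p c k i Z]
      total_effect_self[of i "{..<p}" "me_w c"]
    by (cases "k = i") (auto simp: nu_leaves_iff)
  then show ?thesis unfolding row_support_eq by blast
qed

lemma row_support_inj_on_nu_leaves: "inj_on S N"
proof
  fix i v assume "i \<in> N" "v \<in> N" "S i = S v"
  then have "insert i {k. me_anc p c k i} = insert v {k. me_anc p c k v}"
    using row_support_nu_leaf by simp
  then have "i = v \<or> (me_anc p c i v \<and> me_anc p c v i)"
    by (metis insertE insertI1 mem_Collect_eq)
  then show "i = v"
    using acyclic_E unfolding me_anc_def acyclic_def by (meson trancl_trans)
qed

lemma u_leaf_less: "u_leaf p Z c x \<Longrightarrow> x < p"
  using sem_me by (auto simp: sem_me_def u_leaf_def)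

lemma aog_parent_iff_row_support_eq:
  assumes x: "u_leaf p Z c x" and i: "i \<in> N"
  shows "me_aog_parent p c x i \<longleftrightarrow> S x = S i"
proof
  assume "me_aog_parent p c x i"
  then show "S x = S i"
    using me_aog_parent_ancestors u_leaf_less[OF x] row_support_u_leaf[OF x]
      row_support_nu_leaf[OF i]
    by simp
next
  assume "S x = S i"
  then have anc: "me_anc p c k x \<longleftrightarrow> k = i \<or> me_anc p c k i" for k
    using row_support_u_leaf[OF x] row_support_nu_leaf[OF i] by blast
  show "me_aog_parent p c x i"
  proof (rule me_aog_parentI[OF acyclic_E])
    show "me_anc p c i x" using anc by blast
    show "me_anc p c z i" if "(z, x) \<in> E" "z \<noteq> i" for z
      using anc[of z] that by (auto simp: me_anc_def)
  qed
qed

lemma me_aog_eq_row_support_classes: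
  "me_aog p Z c = (\<lambda>i. {v. v < p \<and> S v = S i}) ` N
     \<union> (\<lambda>x. {x}) ` {x. x < p \<and> x \<notin> N \<and> (\<forall>i\<in>N. S x \<noteq> S i)}"
proof -
  have group: "insert i {x. u_leaf p Z c x \<and> me_aog_parent p c x i} = {v. v < p \<and> S v = S i}"
    if i: "i \<in> N" for i
  proof (intro equalityI subsetI)
    fix v assume "v \<in> insert i {x. u_leaf p Z c x \<and> me_aog_parent p c x i}"
    then show "v \<in> {v. v < p \<and> S v = S i}"
      using i aog_parent_iff_row_support_eq u_leaf_less by (auto simp: nu_leaves_iff)
  next
    fix v assume v: "v \<in> {v. v < p \<and> S v = S i}"
    show "v \<in> insert i {x. u_leaf p Z c x \<and> me_aog_parent p c x i}"
    proof (cases "v \<in> N")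
      case True
      then show ?thesis using v i row_support_inj_on_nu_leaves by (auto dest: inj_onD)
    next
      case False
      then show ?thesis using v aog_parent_iff_row_support_eq[OF _ i] by (simp add: nu_leaves_iff)
    qed
  qed
  have singleton: "u_leaf p Z c x \<and> \<not> (\<exists>i. me_aog_parent p c x i) \<longleftrightarrow>
      x < p \<and> x \<notin> N \<and> (\<forall>i\<in>N. S x \<noteq> S i)" for x
  proof
    assume "u_leaf p Z c x \<and> \<not> (\<exists>i. me_aog_parent p c x i)"
    then show "x < p \<and> x \<notin> N \<and> (\<forall>i\<in>N. S x \<noteq> S i)"
      using aog_parent_iff_row_support_eq[of x] u_leaf_less[of x] by (auto simp: nu_leaves_iff)
  next
    assume x: "x < p \<and> x \<notin> N \<and> (\<forall>i\<in>N. S x \<noteq> S i)"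
    then have "u_leaf p Z c x" by (simp add: nu_leaves_iff)
    moreover have "\<not> me_aog_parent p c x i" for i
      using x calculation aog_parent_iff_row_support_eq[of x i]
        me_aog_parent_in_nu_leaves[of p c x i Z]
      by auto
    ultimately show "u_leaf p Z c x \<and> \<not> (\<exists>i. me_aog_parent p c x i)" by blast
  qed
  show ?thesis unfolding me_aog_def using group singleton by (auto simp: image_def)
qed

end

locale me_mix_equivalent = me_faithful_model +
  fixes c' :: "nat \<Rightarrow> nat \<Rightarrow> real" and \<sigma> :: "nat \<Rightarrow> nat" and l :: "nat \<Rightarrow> real"
  assumes sem_me': "sem_me p Z c'"
    and bij: "bij_betw \<sigma> (nu_leaves p Z c) (nu_leaves p Z c')"
    and scale_nonzero: "\<And>j. j \<in> nu_leaves p Z c \<Longrightarrow> l j \<noteq> 0"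
    and total_effect_match: "\<And>j v. j \<in> nu_leaves p Z c \<Longrightarrow>
       total_effect {..<p} (me_w c') (\<sigma> j) v = l j * total_effect {..<p} (me_w c) j v"
begin

abbreviation "E' \<equiv> wedges {..<p} (me_w c')"
abbreviation "T' \<equiv> total_effect {..<p} (me_w c')"
abbreviation "N' \<equiv> nu_leaves p Z c'"
abbreviation "S' \<equiv> me_row_support p Z c'"

lemma acyclic_E': "acyclic E'"
  using sem_me' by (simp add: sem_me_def)

lemma image_nu_leaves: "\<sigma> ` N = N'"
  using bij by (simp add: bij_betw_def)

lemma nu_leaf'_preimage: "x \<in> N' \<Longrightarrow> \<exists>k\<in>N. \<sigma> k = x"
  using image_nu_leaves by (metis imageE)

lemma nu_leaves_less: "j \<in> N \<Longrightarrow> j < p" "x \<in> N' \<Longrightarrow> x < p"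
  by (simp_all add: nu_leaves_iff)

lemma total_effect'_match_iff: "j \<in> N \<Longrightarrow> T' (\<sigma> j) v \<noteq> 0 \<longleftrightarrow> T j v \<noteq> 0"
  using total_effect_match scale_nonzero by simp

lemma total_effect_to_match:
  assumes "j \<in> N" shows "T j (\<sigma> j) \<noteq> 0"
proof -
  have "\<sigma> j < p" using assms image_nu_leaves nu_leaves_less(2) by blast
  then show ?thesis
    using total_effect'_match_iff[OF assms, of "\<sigma> j"] by (simp add: total_effect_self)
qed

lemma total_effect'_from_match: "j \<in> N \<Longrightarrow> T' (\<sigma> j) j \<noteq> 0"
  using total_effect'_match_iff[of j j] nu_leaves_less(1) by (simp add: total_effect_self)

lemma moved_not_nu_leaf':
  assumes j: "j \<in> N" and moved: "\<sigma> j \<noteq> j" shows "j \<notin> N'"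
proof
  assume "j \<in> N'"
  then obtain k where k: "k \<in> N" "\<sigma> k = j" using nu_leaf'_preimage by blast
  have "T k j \<noteq> 0" using total_effect_to_match[OF k(1)] k(2) by simp
  then have "T k (\<sigma> j) \<noteq> 0" by (rule total_effect_trans[OF _ total_effect_to_match[OF j]])
  then have "T' j (\<sigma> j) \<noteq> 0" using total_effect'_match_iff[OF k(1)] k(2) by simp
  then have "(j, \<sigma> j) \<in> E'\<^sup>+" using moved by (simp add: total_effect_nonzero_imp_trancl)
  moreover have "(\<sigma> j, j) \<in> E'\<^sup>+"
    using total_effect_nonzero_imp_trancl[OF total_effect'_from_match[OF j] moved] .
  ultimately show False using acyclic_E' unfolding acyclic_def by (meson trancl_trans)
qed

lemma moved_parent'_below_match:
  assumes j: "j \<in> N" and moved: "\<sigma> j \<noteq> j" and zj: "(z, j) \<in> E'" and z: "z \<noteq> \<sigma> j"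
  shows "me_anc p c' z (\<sigma> j)"
proof -
  obtain x where x: "x = z \<or> (z, x) \<in> E'" "x \<noteq> j" "T' x j \<noteq> 0"
    using wedge_total_effect_via_successor[OF _ acyclic_E' zj] by blast
  have "x \<in> N'" using total_effect_source_in_nu_leaves[OF x(3,2)] .
  then obtain k where k: "k \<in> N" "\<sigma> k = x" using nu_leaf'_preimage by blast
  have "T k j \<noteq> 0" using total_effect'_match_iff[OF k(1)] k(2) x(3) by simp
  then have "T k (\<sigma> j) \<noteq> 0" by (rule total_effect_trans[OF _ total_effect_to_match[OF j]])
  then have "T' x (\<sigma> j) \<noteq> 0" using total_effect'_match_iff[OF k(1)] k(2) by simp
  then have "x = \<sigma> j \<or> (x, \<sigma> j) \<in> E'\<^sup>+"
    by (cases "x = \<sigma> j") (simp_all add: total_effect_nonzero_imp_trancl)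
  then show ?thesis using x(1) z unfolding me_anc_def by (auto intro: trancl_into_trancl2)
qed

lemma moved_aog_parent':
  assumes j: "j \<in> N" and moved: "\<sigma> j \<noteq> j"
  shows "u_leaf p Z c' j" "me_aog_parent p c' j (\<sigma> j)"
proof -
  show "u_leaf p Z c' j"
    using moved_not_nu_leaf'[OF j moved] nu_leaves_less(1)[OF j] by (simp add: nu_leaves_iff)
  have "me_anc p c' (\<sigma> j) j"
    using total_effect_nonzero_imp_trancl[OF total_effect'_from_match[OF j] moved]
    by (simp add: me_anc_def)
  then show "me_aog_parent p c' j (\<sigma> j)"
    using me_aog_parentI[OF acyclic_E'] moved_parent'_below_match[OF j moved] by blast
qed

lemma row_support_match_if_same_aog:
  assumes same_aog: "me_aog p Z c' = me_aog p Z c" and j: "j \<in> N"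
  shows "S (\<sigma> j) = S j"
proof (cases "\<sigma> j = j")
  case False
  txt \<open>\<open>j\<close> lies in the AOG group of \<open>\<sigma> j\<close> for \<open>c'\<close>; as a group for \<open>c\<close> it is the group of \<open>j\<close>.\<close>
  define G where "G = insert (\<sigma> j) {x. u_leaf p Z c' x \<and> me_aog_parent p c' x (\<sigma> j)}"
  have "\<sigma> j \<in> N'" using j image_nu_leaves by blast
  then have "G \<in> me_aog p Z c'" by (auto simp: G_def me_aog_def)
  then have "G \<in> me_aog p Z c" using same_aog by simp
  moreover have "j \<in> G" "\<sigma> j \<in> G" using moved_aog_parent'[OF j False] by (auto simp: G_def)
  ultimately have "\<sigma> j \<in> insert j {x. u_leaf p Z c x \<and> me_aog_parent p c x j}"
    using j False by (auto simp: me_aog_def nu_leaves_iff)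
  then show ?thesis using aog_parent_iff_row_support_eq j False by auto
qed simp

lemma total_effect'_trans_if_same_aog:
  assumes same_aog: "me_aog p Z c' = me_aog p Z c" and am: "T' a m \<noteq> 0" and mb: "T' m b \<noteq> 0"
  shows "T' a b \<noteq> 0"
proof (cases "a = m \<or> m = b")
  case False
  then have "a \<in> N'" "m \<in> N'"
    using total_effect_source_in_nu_leaves am mb by auto
  then obtain \<alpha> \<mu> where \<alpha>: "\<alpha> \<in> N" "\<sigma> \<alpha> = a" and \<mu>: "\<mu> \<in> N" "\<sigma> \<mu> = m"
    using nu_leaf'_preimage by metis
  have "\<alpha> \<in> S (\<sigma> \<mu>)" using am \<alpha> \<mu> total_effect'_match_iff[OF \<alpha>(1)] by (simp add: row_support_eq)
  then have "T \<alpha> \<mu> \<noteq> 0"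
    using row_support_match_if_same_aog[OF same_aog \<mu>(1)] by (auto simp: row_support_eq)
  moreover have "T \<mu> b \<noteq> 0" using mb \<mu> total_effect'_match_iff[OF \<mu>(1)] by simp
  ultimately have "T \<alpha> b \<noteq> 0" by (rule total_effect_trans)
  then show ?thesis using \<alpha> total_effect'_match_iff[OF \<alpha>(1)] by simp
qed (use am mb in auto)

lemma faithful'_if_same_aog:
  assumes "me_aog p Z c' = me_aog p Z c" shows "me_faithful p c'"
  unfolding me_faithful_def
  by (rule faithful_aI[OF _ acyclic_E']) (use total_effect'_trans_if_same_aog[OF assms] in auto)

lemma row_support'_eq_image: "S' v = \<sigma> ` S v"
proof (intro equalityI subsetI)
  fix x assume "x \<in> S' v"
  then have x: "x \<in> N'" "T' x v \<noteq> 0" by (simp_all add: me_row_support_def me_mix_def)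
  then obtain k where "k \<in> N" "\<sigma> k = x" using nu_leaf'_preimage by blast
  then show "x \<in> \<sigma> ` S v" using x(2) total_effect'_match_iff by (auto simp: row_support_eq)
next
  fix x assume "x \<in> \<sigma> ` S v"
  then obtain k where "k \<in> N" "T k v \<noteq> 0" "x = \<sigma> k" by (auto simp: row_support_eq)
  then show "x \<in> S' v"
    using total_effect'_match_iff image_nu_leaves by (auto simp: me_row_support_def me_mix_def)
qed

lemma row_support'_eq_iff: "S' v = S' w \<longleftrightarrow> S v = S w"
  unfolding row_support'_eq_image
  using inj_on_image_eq_iff[of \<sigma> N "S v" "S w"] bij by (auto simp: bij_betw_def row_support_eq)

lemma row_support_match_if_faithful':
  assumes faithful': "me_faithful p c'" and i: "i \<in> N"
  shows "S (\<sigma> i) = S i"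
proof
  show "S i \<subseteq> S (\<sigma> i)"
    using total_effect_trans[OF _ total_effect_to_match[OF i]] by (auto simp: row_support_eq)
  have "T' k i \<noteq> 0" if "T' k (\<sigma> i) \<noteq> 0" for k
    using faithful' faithful_a_total_effect_trans[OF _ that total_effect'_from_match[OF i]]
    by (simp add: me_faithful_def)
  then have "S' (\<sigma> i) \<subseteq> S' i" by (auto simp: me_row_support_def me_mix_def)
  then show "S (\<sigma> i) \<subseteq> S i"
    unfolding row_support'_eq_image
    using inj_on_image_subset_iff[of \<sigma> N] bij by (auto simp: bij_betw_def row_support_eq)
qed

lemma same_aog_if_faithful':
  assumes faithful': "me_faithful p c'" shows "me_aog p Z c' = me_aog p Z c"
proof -
  interpret c': me_faithful_model p Z c' using sem_me' faithful' by unfold_locales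
  have match: "S' v = S' (\<sigma> i) \<longleftrightarrow> S v = S i" if "i \<in> N" for v i
    using row_support'_eq_iff row_support_match_if_faithful'[OF faithful' that] by simp
  have "(\<lambda>i. {v. v < p \<and> S' v = S' i}) ` N' = (\<lambda>i. {v. v < p \<and> S v = S i}) ` N"
    unfolding image_nu_leaves[symmetric] image_image using match by (intro image_cong) auto
  moreover have "(\<forall>i\<in>N'. S' x \<noteq> S' i) \<longleftrightarrow> (\<forall>i\<in>N. S x \<noteq> S i)" for x
    unfolding image_nu_leaves[symmetric] using match by auto
  moreover have "x \<notin> N \<and> x \<notin> N'" if "\<forall>i\<in>N. S x \<noteq> S i" for x
    using that row_support_match_if_faithful'[OF faithful'] nu_leaf'_preimage by metis
  ultimately show ?thesis
    unfolding me_aog_eq_row_support_classes c'.me_aog_eq_row_support_classes by auto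
qed

end

lemma me_mix_equivalentI:
  assumes "sem_me p Z c" "me_faithful p c" "sem_me p Z c'" "me_mix_equiv p Z c c'"
  shows "\<exists>\<sigma> l. me_mix_equivalent p Z c c' \<sigma> l"
proof -
  obtain \<sigma> l where bij: "bij_betw \<sigma> (nu_leaves p Z c) (nu_leaves p Z c')"
    and l: "\<forall>j \<in> nu_leaves p Z c. l j \<noteq> 0"
    and mix: "\<forall>v < p. \<forall>j \<in> nu_leaves p Z c. me_mix p c' v (\<sigma> j) = l j * me_mix p c v j"
    using assms(4) unfolding me_mix_equiv_def by blast
  have "total_effect {..<p} (me_w c') (\<sigma> j) v = l j * total_effect {..<p} (me_w c) j v"
    if j: "j \<in> nu_leaves p Z c" for j v
  proof (cases "v < p")
    case True
    then show ?thesis using mix j by (simp add: me_mix_def)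
  next
    case False
    then have "total_effect {..<p} (me_w c') (\<sigma> j) v = 0" "total_effect {..<p} (me_w c) j v = 0"
      using total_effect_nonzero_imp_in_V(2) by (metis lessThan_iff)+
    then show ?thesis by simp
  qed
  then have "me_mix_equivalent p Z c c' \<sigma> l" using assms bij l by unfold_locales auto
  then show ?thesis by blast
qed

lemma me_aog_class_eq:
  assumes "sem_me p Z c" "me_faithful p c"
  shows "me_aog_class p Z c = {c'. sem_me p Z c' \<and> me_mix_equiv p Z c c' \<and> me_faithful p c'}"
proof (intro equalityI subsetI)
  fix c' assume "c' \<in> me_aog_class p Z c"
  then have c': "sem_me p Z c'" "me_mix_equiv p Z c c'" "me_aog p Z c' = me_aog p Z c"
    by (simp_all add: me_aog_class_def)
  then obtain \<sigma> l where "me_mix_equivalent p Z c c' \<sigma> l"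
    using me_mix_equivalentI[OF assms c'(1,2)] by blast
  then show "c' \<in> {c'. sem_me p Z c' \<and> me_mix_equiv p Z c c' \<and> me_faithful p c'}"
    using c' me_mix_equivalent.faithful'_if_same_aog by blast
next
  fix c' assume "c' \<in> {c'. sem_me p Z c' \<and> me_mix_equiv p Z c c' \<and> me_faithful p c'}"
  then have c': "sem_me p Z c'" "me_mix_equiv p Z c c'" "me_faithful p c'" by simp_all
  then obtain \<sigma> l where "me_mix_equivalent p Z c c' \<sigma> l"
    using me_mix_equivalentI[OF assms] by blast
  then show "c' \<in> me_aog_class p Z c"
    using c' me_mix_equivalent.same_aog_if_faithful' by (simp add: me_aog_class_def)
qed

section \<open>SEM-UR: column supports of the mixing matrix\<close>

lemma matrix_inv_eq_left_inverse:
  fixes A M :: "'a::field^'n^'n"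
  assumes "M ** A = mat 1" shows "matrix_inv A = M"
proof -
  have AM: "A ** M = mat 1" using assms matrix_left_right_inverse by blast
  have inv: "matrix_inv A ** A = mat 1"
    unfolding matrix_inv_def using AM assms by (rule someI2[where a = M, OF conjI]) simp
  have "matrix_inv A = matrix_inv A ** (A ** M)" by (simp add: AM matrix_mul_rid)
  also have "\<dots> = M" by (simp add: matrix_mul_assoc inv matrix_mul_lid)
  finally show ?thesis .
qed

lemma sum_UNIV_sum_type:
  "(\<Sum>m\<in>UNIV. f m) = (\<Sum>h\<in>UNIV. f (Inl h)) + (\<Sum>x\<in>UNIV. f (Inr x))"
  for f :: "'a::finite + 'b::finite \<Rightarrow> 'c::comm_monoid_add"
  using sum.Plus[of "UNIV :: 'a set" "UNIV :: 'b set" f] by (simp add: comp_def)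

lemma ur_w_simps [simp]:
  "ur_w A B (Inl h) (Inr j) = B $ j $ h"
  "ur_w A B (Inr k) (Inr j) = A $ j $ k"
  "ur_w A B u (Inl h') = 0"
  by (cases u; simp add: ur_w_def)+

lemma ur_wedges_iff: "(u, v) \<in> wedges UNIV (ur_w A B) \<longleftrightarrow> ur_w A B u v \<noteq> 0"
  by (simp add: wedges_def)

lemma ur_wedgesE:
  assumes "(u, v) \<in> wedges UNIV (ur_w A B)"
  obtains h j where "u = Inl h" "v = Inr j" "B $ j $ h \<noteq> 0"
    | k j where "u = Inr k" "v = Inr j" "A $ j $ k \<noteq> 0"
  using assms by (cases u; cases v) (auto simp: ur_wedges_iff)

lemma acyclic_ur_wedges:
  fixes A :: "real^'x^'x" and B :: "real^'h^'x"
  assumes "sem_ur A" shows "acyclic (wedges UNIV (ur_w A B))"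
proof -
  obtain ord :: "'x \<Rightarrow> nat" where ord: "\<forall>j k. A $ j $ k \<noteq> 0 \<longrightarrow> ord k < ord j"
    using assms by (auto simp: sem_ur_def)
  define f :: "'h + 'x \<Rightarrow> nat" where "f = case_sum (\<lambda>_. 0) (\<lambda>x. Suc (ord x))"
  have edge: "f u < f v" if "(u, v) \<in> wedges UNIV (ur_w A B)" for u v
    using that by (rule ur_wedgesE) (use ord in \<open>auto simp: f_def\<close>)
  have "f u < f v" if "(u, v) \<in> (wedges UNIV (ur_w A B))\<^sup>+" for u v
    using that by (induction rule: trancl_induct) (auto dest: edge)
  then show ?thesis by (auto simp: acyclic_def)
qed

lemma total_effect_into_latent:
  assumes "total_effect UNIV (ur_w A B) u (Inl h) \<noteq> 0" shows "u = Inl h"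
proof (rule ccontr)
  assume "u \<noteq> Inl h"
  then have "(u, Inl h) \<in> (wedges UNIV (ur_w A B))\<^sup>+"
    using total_effect_nonzero_imp_trancl[OF assms] by blast
  then show False by (rule tranclE) (auto elim: ur_wedgesE)
qed

lemma total_effect_observed_step:
  assumes "sem_ur A"
  shows "total_effect UNIV (ur_w A B) (Inr k) (Inr i)
    = (if k = i then 1 else 0)
      + (\<Sum>j\<in>UNIV. A $ j $ k * total_effect UNIV (ur_w A B) (Inr j) (Inr i))"
proof (cases "k = i")
  case True
  have "A $ j $ i * total_effect UNIV (ur_w A B) (Inr j) (Inr i) = 0" for j
  proof (rule ccontr)
    assume "A $ j $ i * total_effect UNIV (ur_w A B) (Inr j) (Inr i) \<noteq> 0"
    then have "(Inr i, Inr j) \<in> wedges UNIV (ur_w A B)"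
      "(Inr j, Inr i) \<in> (wedges UNIV (ur_w A B))\<^sup>*"
      using total_effect_nonzero_imp_trancl[of UNIV "ur_w A B" "Inr j" "Inr i"]
      by (auto simp: ur_wedges_iff rtrancl_eq_or_trancl)
    then show False using acyclic_ur_wedges[OF assms] by (meson acyclic_def rtrancl_into_trancl2)
  qed
  then have "(\<Sum>j\<in>UNIV. A $ j $ k * total_effect UNIV (ur_w A B) (Inr j) (Inr i)) = 0"
    using True by (intro sum.neutral) simp
  then show ?thesis using True by (simp add: total_effect_self)
next
  case False
  then show ?thesis
    using total_effect_first_step[OF _ acyclic_ur_wedges[OF assms], of "Inr k" "Inr i"]
    by (simp add: sum_UNIV_sum_type)
qed

lemma total_effect_latent_step:
  assumes "sem_ur A"
  shows "total_effect UNIV (ur_w A B) (Inl h) (Inr i)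
    = (\<Sum>j\<in>UNIV. B $ j $ h * total_effect UNIV (ur_w A B) (Inr j) (Inr i))"
  using total_effect_first_step[OF _ acyclic_ur_wedges[OF assms], of "Inl h" "Inr i"]
  by (simp add: sum_UNIV_sum_type)

lemma matrix_inv_eq_total_effects:
  assumes "sem_ur A"
  shows "matrix_inv (mat 1 - A) = (\<chi> i k. total_effect UNIV (ur_w A B) (Inr k) (Inr i))"
proof (rule matrix_inv_eq_left_inverse)
  let ?T = "total_effect UNIV (ur_w A B)"
  show "(\<chi> i k. ?T (Inr k) (Inr i)) ** (mat 1 - A) = mat 1"
  proof (intro iffD2[OF vec_eq_iff] allI)
    fix i k
    have "((\<chi> i k. ?T (Inr k) (Inr i)) ** (mat 1 - A)) $ i $ k
        = (\<Sum>j\<in>UNIV. (if j = k then ?T (Inr j) (Inr i) else 0) - A $ j $ k * ?T (Inr j) (Inr i))"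
      unfolding matrix_matrix_mult_def by (auto simp: mat_def algebra_simps intro: sum.cong)
    also have "\<dots> = ?T (Inr k) (Inr i) - (\<Sum>j\<in>UNIV. A $ j $ k * ?T (Inr j) (Inr i))"
      by (simp add: sum_subtractf)
    also have "\<dots> = mat 1 $ i $ k"
      using total_effect_observed_step[OF assms, where k = k and i = i and B = B]
      by (simp add: mat_def)
    finally show "((\<chi> i k. ?T (Inr k) (Inr i)) ** (mat 1 - A)) $ i $ k = mat 1 $ i $ k" .
  qed
qed

lemma ur_mix_eq_total_effect:
  assumes "sem_ur A"
  shows "ur_mix A B i col = total_effect UNIV (ur_w A B) col (Inr i)"
proof (cases col)
  case (Inl h)
  then show ?thesis
    using matrix_inv_eq_total_effects[OF assms, of B]
      total_effect_latent_step[OF assms, where h = h and i = i and B = B]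
    by (simp add: ur_mix_def matrix_matrix_mult_def mult.commute)
qed (simp add: ur_mix_def matrix_inv_eq_total_effects[OF assms, of B])

lemma ur_aog_childI:
  assumes "acyclic (wedges UNIV (ur_w A B))" "ur_desc A B (Inl h) (Inr i)"
    and "\<And>k. B $ k $ h \<noteq> 0 \<Longrightarrow> k \<noteq> i \<Longrightarrow> ur_desc A B (Inr i) (Inr k)"
  shows "ur_aog_child A B h i"
proof -
  let ?E = "wedges UNIV (ur_w A B)"
  obtain u where "(Inl h, u) \<in> ?E" "(u, Inr i) \<in> ?E\<^sup>*"
    using assms(2) unfolding ur_desc_def by (meson tranclD)
  then obtain k where k: "B $ k $ h \<noteq> 0" "(Inr k, Inr i) \<in> ?E\<^sup>*"
    by (auto elim: ur_wedgesE)
  have "k = i"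
  proof (rule ccontr)
    assume "k \<noteq> i"
    then have "(Inr i, Inr i) \<in> ?E\<^sup>+"
      using assms(3)[OF k(1)] k(2) unfolding ur_desc_def by (meson trancl_rtrancl_trancl)
    then show False using assms(1) by (simp add: acyclic_def)
  qed
  then show ?thesis using k(1) assms(3) by (auto simp: ur_aog_child_def ur_children_def)
qed

lemma ur_aog_child_descendants:
  assumes "ur_aog_child A B h i"
  shows "{x. ur_desc A B (Inl h) (Inr x)} = insert i {x. ur_desc A B (Inr i) (Inr x)}"
proof -
  let ?E = "wedges UNIV (ur_w A B)"
  have hi: "(Inl h, Inr i) \<in> ?E" and child: "\<And>k. B $ k $ h \<noteq> 0 \<Longrightarrow> k = i \<or> (Inr i, Inr k) \<in> ?E\<^sup>+"
    using assms by (auto simp: ur_aog_child_def ur_children_def ur_desc_def ur_wedges_iff)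
  have "x = i \<or> (Inr i, Inr x) \<in> ?E\<^sup>+" if hx: "(Inl h, Inr x) \<in> ?E\<^sup>+" for x
  proof -
    obtain u where "(Inl h, u) \<in> ?E" "(u, Inr x) \<in> ?E\<^sup>*"
      using hx by (meson tranclD)
    then obtain k where "B $ k $ h \<noteq> 0" "Inr k = Inr x \<or> (Inr k, Inr x) \<in> ?E\<^sup>+"
      by (auto elim: ur_wedgesE simp: rtrancl_eq_or_trancl)
    then show ?thesis using child by (auto intro: trancl_trans)
  qed
  then show ?thesis using hi by (auto simp: ur_desc_def intro: trancl_into_trancl2)
qed

lemma aog_children'_eq_image:
  fixes A A' :: "real^'x^'x" and B B' :: "real^'h^'x" and \<pi> :: "'h \<Rightarrow> 'h"
  assumes iso: "ur_aog A' B' = (\<lambda>G. map_sum \<pi> id ` G) ` ur_aog A B"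
  shows "{g. ur_aog_child A' B' g k} = \<pi> ` {h. ur_aog_child A B h k}"
proof -
  let ?J' = "{g. ur_aog_child A' B' g k}"
  have "insert (Inr k) (Inl ` ?J') \<in> ur_aog A' B'"
    unfolding ur_aog_def by (auto simp: setcompr_eq_image)
  then obtain G where G: "G \<in> ur_aog A B"
    and G': "insert (Inr k) (Inl ` ?J') = map_sum \<pi> id ` G"
    using iso by auto
  from G consider i where "G = insert (Inr i) (Inl ` {h. ur_aog_child A B h i})"
    | h where "G = {Inl h}"
    unfolding ur_aog_def by (auto simp: setcompr_eq_image)
  then show ?thesis
  proof cases
    case (1 i)
    then have "insert (Inr k) (Inl ` ?J') = insert (Inr i) (Inl ` \<pi> ` {h. ur_aog_child A B h i})"
      using G' by (simp add: image_image)
    moreover from this have "i = k" by blast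
    ultimately have
      "insert (Inr k) (Inl ` ?J') = insert (Inr k) (Inl ` \<pi> ` {h. ur_aog_child A B h k})"
      by simp
    then have "Inl ` ?J' = (Inl ` \<pi> ` {h. ur_aog_child A B h k} :: ('h + 'x) set)"
      by (subst (asm) insert_ident) auto
    then show ?thesis by (simp add: inj_image_eq_iff)
  next
    case 2
    then show ?thesis using G' by auto
  qed
qed

definition ur_column_support :: "real^'x^'x \<Rightarrow> real^'h^'x \<Rightarrow> 'h + 'x \<Rightarrow> 'x set" where
  "ur_column_support A B col = {i. ur_mix A B i col \<noteq> 0}"

locale ur_faithful_model =
  fixes A :: "real^'x::finite^'x" and B :: "real^'h::finite^'x"
  assumes sem_ur: "sem_ur A" and faithful: "ur_faithful A B"
begin

abbreviation "E \<equiv> wedges UNIV (ur_w A B)"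
abbreviation "T \<equiv> total_effect UNIV (ur_w A B)"
abbreviation "C \<equiv> ur_column_support A B"

lemma acyclic_E: "acyclic E"
  using acyclic_ur_wedges[OF sem_ur] .

lemma total_effect_trans: "T a b \<noteq> 0 \<Longrightarrow> T b d \<noteq> 0 \<Longrightarrow> T a d \<noteq> 0"
  using faithful faithful_a_total_effect_trans[of UNIV "ur_w A B" a b d]
  unfolding ur_faithful_def by blast

lemma total_effect_nonzero_iff_descendant: "u \<noteq> v \<Longrightarrow> T u v \<noteq> 0 \<longleftrightarrow> ur_desc A B u v"
  using faithful total_effect_nonzero_imp_trancl[of UNIV "ur_w A B" u v]
  unfolding ur_faithful_def faithful_a_def ur_desc_def by blast

lemma column_support_eq: "C v = {x. T v (Inr x) \<noteq> 0}"
  by (simp add: ur_column_support_def ur_mix_eq_total_effect[OF sem_ur])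

lemma column_support_latent: "C (Inl h) = {x. ur_desc A B (Inl h) (Inr x)}"
  using total_effect_nonzero_iff_descendant by (simp add: column_support_eq)

lemma column_support_observed: "C (Inr i) = insert i {x. ur_desc A B (Inr i) (Inr x)}"
proof -
  have "T (Inr i) (Inr x) \<noteq> 0 \<longleftrightarrow> x = i \<or> ur_desc A B (Inr i) (Inr x)" for x
    using total_effect_nonzero_iff_descendant[of "Inr i" "Inr x"]
    by (cases "x = i") (simp_all add: total_effect_self)
  then show ?thesis by (auto simp: column_support_eq)
qed

lemma column_support_trans: "x \<in> C v \<Longrightarrow> C (Inr x) \<subseteq> C v"
  using total_effect_trans by (auto simp: column_support_eq)

lemma column_support_observed_inj: "C (Inr k) = C (Inr m) \<Longrightarrow> k = m"
proof (rule ccontr)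
  assume eq: "C (Inr k) = C (Inr m)" and "k \<noteq> m"
  have "k \<in> C (Inr m)" "m \<in> C (Inr k)" using eq column_support_observed by auto
  then have "ur_desc A B (Inr m) (Inr k)" "ur_desc A B (Inr k) (Inr m)"
    using column_support_observed \<open>k \<noteq> m\<close> by auto
  then show False using acyclic_E unfolding ur_desc_def acyclic_def by (meson trancl_trans)
qed

lemma aog_child_iff_column_support_eq: "ur_aog_child A B h i \<longleftrightarrow> C (Inl h) = C (Inr i)"
proof
  assume "ur_aog_child A B h i"
  then show "C (Inl h) = C (Inr i)"
    using ur_aog_child_descendants column_support_latent column_support_observed by simp
next
  assume "C (Inl h) = C (Inr i)"
  then have desc: "ur_desc A B (Inl h) (Inr x) \<longleftrightarrow> x = i \<or> ur_desc A B (Inr i) (Inr x)" for x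
    using column_support_latent column_support_observed by blast
  show "ur_aog_child A B h i"
  proof (rule ur_aog_childI[OF acyclic_E])
    show "ur_desc A B (Inl h) (Inr i)" using desc by blast
    show "ur_desc A B (Inr i) (Inr k)" if "B $ k $ h \<noteq> 0" "k \<noteq> i" for k
      using desc[of k] that by (auto simp: ur_desc_def ur_wedges_iff)
  qed
qed

lemma ur_aog_eq_column_support_classes:
  "ur_aog A B = (\<lambda>i. insert (Inr i) (Inl ` {h. C (Inl h) = C (Inr i)})) ` UNIV
     \<union> (\<lambda>h. {Inl h}) ` {h. \<forall>i. C (Inl h) \<noteq> C (Inr i)}"
  unfolding ur_aog_def aog_child_iff_column_support_eq by (auto simp: image_def setcompr_eq_image)

end

locale ur_mix_equivalent = ur_faithful_model A B
  for A :: "real^'x::finite^'x" and B :: "real^'h::finite^'x" +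
  fixes A' :: "real^'x^'x" and B' :: "real^'h^'x"
    and \<sigma> :: "'h + 'x \<Rightarrow> 'h + 'x" and l :: "'h + 'x \<Rightarrow> real"
  assumes sem_ur': "sem_ur A'" and bij: "bij \<sigma>" and scale_nonzero: "\<And>v. l v \<noteq> 0"
    and mix_match: "\<And>i v. ur_mix A' B' i (\<sigma> v) = l v * ur_mix A B i v"
begin

abbreviation "E' \<equiv> wedges UNIV (ur_w A' B')"
abbreviation "T' \<equiv> total_effect UNIV (ur_w A' B')"
abbreviation "C' \<equiv> ur_column_support A' B'"

lemma acyclic_E': "acyclic E'"
  using acyclic_ur_wedges[OF sem_ur'] .

lemma column_support'_match [simp]: "C' (\<sigma> v) = C v"
  using mix_match scale_nonzero by (simp add: ur_column_support_def)

lemma column_support'_eq: "C' v = {x. T' v (Inr x) \<noteq> 0}"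
  by (simp add: ur_column_support_def ur_mix_eq_total_effect[OF sem_ur'])

lemma column_support'_observed: "x \<in> C' (Inr i) \<Longrightarrow> x = i \<or> (Inr i, Inr x) \<in> E'\<^sup>+"
  by (cases "x = i") (auto simp: column_support'_eq total_effect_nonzero_imp_trancl)

lemma match_eq_iff [simp]: "\<sigma> u = \<sigma> v \<longleftrightarrow> u = v"
  using bij by (meson bij_def injD)

lemma match_surj: "\<exists>v. \<sigma> v = u"
  using bij by (metis bij_pointE)

lemma in_column_support_if_match_observed:
  assumes "\<sigma> v = Inr x" shows "x \<in> C v"
proof -
  have "x \<in> C' (Inr x)" by (simp add: column_support'_eq total_effect_self)
  then show ?thesis using column_support'_match[of v] assms by simp
qed

lemma observed_match_observed:
  assumes "\<sigma> (Inr j) = Inr m" shows "j = m"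
proof (rule ccontr)
  assume ne: "j \<noteq> m"
  obtain v where v: "\<sigma> v = Inr j" using match_surj by blast
  have "m \<in> C (Inr j)" using in_column_support_if_match_observed[OF assms] .
  then have "m \<in> C' (Inr j)"
    using column_support_trans[OF in_column_support_if_match_observed[OF v]] v
      column_support'_match[of v] by auto
  then have "(Inr j, Inr m) \<in> E'\<^sup>+" using column_support'_observed ne by blast
  moreover have "j \<in> C' (Inr m)"
    using column_support'_match[of "Inr j"] assms column_support_observed by simp
  then have "(Inr m, Inr j) \<in> E'\<^sup>+" using column_support'_observed ne by blast
  ultimately show False using acyclic_E' unfolding acyclic_def by (meson trancl_trans)
qed

lemma column_support_subset': "C (Inr k) \<subseteq> C' (Inr k)"
proof -
  obtain v where v: "\<sigma> v = Inr k" using match_surj by blast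
  then show ?thesis
    using column_support_trans[OF in_column_support_if_match_observed[OF v]]
      column_support'_match[of v] by simp
qed

lemma aog_child'_if_column_support_eq:
  assumes eq: "C' (Inl g) = C (Inr k)" shows "ur_aog_child A' B' g k"
proof (rule ur_aog_childI[OF acyclic_E'])
  have desc: "z = k \<or> ur_desc A' B' (Inr k) (Inr z)" if "z \<in> C (Inr k)" for z
    using that column_support_subset' column_support'_observed by (auto simp: ur_desc_def)
  have "k \<in> C' (Inl g)" using eq column_support_observed by simp
  then show "ur_desc A' B' (Inl g) (Inr k)"
    by (simp add: column_support'_eq ur_desc_def total_effect_nonzero_imp_trancl)
  show "ur_desc A' B' (Inr k) (Inr y)" if y: "B' $ y $ g \<noteq> 0" "y \<noteq> k" for y
  proof -
    have "(Inl g, Inr y) \<in> E'" using y by (simp add: ur_wedges_iff)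
    then obtain u where u: "u = Inr y \<or> (u, Inr y) \<in> E'" "u \<noteq> Inl g" "T' (Inl g) u \<noteq> 0"
      using wedge_total_effect_via_predecessor[OF finite_class.finite_UNIV acyclic_E'] by blast
    then obtain j where j: "u = Inr j"
      using total_effect_into_latent[of A' B' "Inl g"] by (cases u) auto
    then have "j \<in> C' (Inl g)" using u(3) by (simp add: column_support'_eq)
    then have "j \<in> C (Inr k)" using eq by simp
    then have "j = k \<or> ur_desc A' B' (Inr k) (Inr j)" by (rule desc)
    then show ?thesis using u(1) j y(2) by (auto simp: ur_desc_def)
  qed
qed

lemma observed_match_cases: "(\<exists>g. \<sigma> (Inr k) = Inl g) \<or> \<sigma> (Inr k) = Inr k"
  using observed_match_observed by (cases "\<sigma> (Inr k)") auto

lemma group_latent_matched_to_observed: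
  assumes \<pi>: "bij \<pi>" and iso: "ur_aog A' B' = (\<lambda>G. map_sum \<pi> id ` G) ` ur_aog A B"
    and g: "\<sigma> (Inr k) = Inl g"
  shows "\<exists>h m. ur_aog_child A B h k \<and> \<sigma> (Inl h) = Inr m"
proof (rule ccontr)
  txt \<open>Otherwise \<open>\<sigma>\<close> maps the latent members of the group of \<open>k\<close> injectively into the latent
    members of the group of \<open>k\<close> for the second model, missing \<open>g\<close>; but both groups have the same
    size.\<close>
  let ?J = "{h. ur_aog_child A B h k}" and ?J' = "{g. ur_aog_child A' B' g k}"
  assume "\<not> ?thesis"
  then have latent: "\<sigma> (Inl h) = Inl (projl (\<sigma> (Inl h)))" if "h \<in> ?J" for h
    using that by (cases "\<sigma> (Inl h)") auto
  define f where "f h = projl (\<sigma> (Inl h))" for h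
  have "f h \<in> ?J'" if "h \<in> ?J" for h
    using aog_child'_if_column_support_eq column_support'_match[of "Inl h"] latent[OF that] that
      aog_child_iff_column_support_eq by (simp add: f_def)
  moreover have "g \<in> ?J'"
    using aog_child'_if_column_support_eq column_support'_match[of "Inr k"] g by simp
  moreover have "g \<notin> f ` ?J"
    using latent g by (auto simp: f_def)
  moreover have "inj_on f ?J"
    using latent by (auto intro!: inj_onI simp: f_def) (metis match_eq_iff sum.inject(1))
  ultimately have "insert g (f ` ?J) \<subseteq> ?J'" "card (insert g (f ` ?J)) = Suc (card ?J)"
    by (auto simp: card_image)
  then have "Suc (card ?J) \<le> card ?J'" by (metis card_mono finite)
  moreover have "card ?J' = card ?J"
    using aog_children'_eq_image[OF iso]
      card_image[OF inj_on_subset[OF bij_is_inj[OF \<pi>] subset_UNIV]]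
    by simp
  ultimately show False by simp
qed

lemma latent_match_column_support_descent:
  assumes \<pi>: "bij \<pi>" and iso: "ur_aog A' B' = (\<lambda>G. map_sum \<pi> id ` G) ` ur_aog A B"
    and h: "\<sigma> (Inl h) = Inr k" and ne: "C (Inl h) \<noteq> C (Inr k)"
  shows "\<exists>h' m. \<sigma> (Inl h') = Inr m \<and> C (Inl h') \<noteq> C (Inr m) \<and> ur_desc A B (Inr k) (Inr m)"
proof -
  have "\<sigma> (Inr k) \<noteq> \<sigma> (Inl h)" by simp
  then obtain g where "\<sigma> (Inr k) = Inl g"
    using observed_match_cases[of k] h by auto
  then obtain h' m where h': "C (Inl h') = C (Inr k)" and m: "\<sigma> (Inl h') = Inr m"
    using group_latent_matched_to_observed[OF \<pi> iso] aog_child_iff_column_support_eq by blast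
  have "m \<noteq> k"
  proof
    assume "m = k"
    then have "\<sigma> (Inl h') = \<sigma> (Inl h)" using h m by simp
    then show False using h' ne by simp
  qed
  then have "C (Inl h') \<noteq> C (Inr m)" using h' column_support_observed_inj by metis
  moreover have "m \<in> C (Inr k)" using in_column_support_if_match_observed[OF m] h' by simp
  then have "ur_desc A B (Inr k) (Inr m)" using column_support_observed \<open>m \<noteq> k\<close> by auto
  ultimately show ?thesis using m by blast
qed

lemma latent_match_column_support:
  assumes \<pi>: "bij \<pi>" and iso: "ur_aog A' B' = (\<lambda>G. map_sum \<pi> id ` G) ` ur_aog A B"
    and h: "\<sigma> (Inl h) = Inr k"
  shows "C (Inl h) = C (Inr k)"
proof -
  have "wf (E\<inverse>)" using finite_acyclic_wf_converse[OF _ acyclic_E] by simp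
  then have wf: "wf (inv_image ((E\<inverse>)\<^sup>+) Inr)" by (intro wf_inv_image wf_trancl)
  show ?thesis
    using h
  proof (induction k arbitrary: h rule: wf_induct_rule[OF wf])
    case (1 k)
    show ?case
    proof (rule ccontr)
      assume "C (Inl h) \<noteq> C (Inr k)"
      then obtain h' m where
        "\<sigma> (Inl h') = Inr m" "C (Inl h') \<noteq> C (Inr m)" "ur_desc A B (Inr k) (Inr m)"
        using latent_match_column_support_descent[OF \<pi> iso "1.prems"] by blast
      then show False using "1.IH" by (auto simp: ur_desc_def trancl_converse)
    qed
  qed
qed

lemma column_support'_trans_if_aog_iso:
  assumes \<pi>: "bij \<pi>" and iso: "ur_aog A' B' = (\<lambda>G. map_sum \<pi> id ` G) ` ur_aog A B"
    and x: "x \<in> C' v"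
  shows "C' (Inr x) \<subseteq> C' v"
proof -
  obtain \<alpha> \<mu> where \<alpha>: "\<sigma> \<alpha> = v" and \<mu>: "\<sigma> \<mu> = Inr x" using match_surj by metis
  have "x \<in> C \<alpha>" using x \<alpha> by auto
  then have "C (Inr x) \<subseteq> C \<alpha>" by (rule column_support_trans)
  moreover have "C \<mu> = C (Inr x)"
  proof (cases \<mu>)
    case (Inl h)
    then show ?thesis using latent_match_column_support[OF \<pi> iso] \<mu> by simp
  next
    case (Inr j)
    then show ?thesis using observed_match_observed[of j x] \<mu> by simp
  qed
  ultimately show ?thesis using \<alpha> \<mu> column_support'_match by metis
qed

lemma faithful'_if_aog_iso:
  assumes \<pi>: "bij \<pi>" and iso: "ur_aog A' B' = (\<lambda>G. map_sum \<pi> id ` G) ` ur_aog A B"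
  shows "ur_faithful A' B'"
  unfolding ur_faithful_def
proof (rule faithful_aI[OF _ acyclic_E'])
  fix a b d assume ab: "T' a b \<noteq> 0" and bd: "T' b d \<noteq> 0"
  show "T' a d \<noteq> 0"
  proof (cases "a = b \<or> b = d")
    case False
    then obtain x y where b: "b = Inr x" and d: "d = Inr y"
      using ab bd total_effect_into_latent by (metis sum.exhaust)
    then have "x \<in> C' a" "y \<in> C' (Inr x)" using ab bd by (simp_all add: column_support'_eq)
    then have "y \<in> C' a" using column_support'_trans_if_aog_iso[OF \<pi> iso] by blast
    then show ?thesis using d by (simp add: column_support'_eq)
  qed (use ab bd in auto)
qed simp

lemma column_support'_observed_if_faithful':
  assumes faithful': "ur_faithful A' B'" shows "C' (Inr x) = C (Inr x)"
proof
  interpret c': ur_faithful_model A' B' using sem_ur' faithful' by unfold_locales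
  show "C (Inr x) \<subseteq> C' (Inr x)" by (rule column_support_subset')
  have "x \<in> C' (\<sigma> (Inr x))" using column_support_observed by simp
  then have "C' (Inr x) \<subseteq> C' (\<sigma> (Inr x))" by (rule c'.column_support_trans)
  then show "C' (Inr x) \<subseteq> C (Inr x)" by simp
qed

lemma latent_relabelling_if_faithful':
  assumes faithful': "ur_faithful A' B'"
  shows "\<exists>\<pi>. bij \<pi> \<and> (\<forall>h. C' (Inl (\<pi> h)) = C (Inl h))"
proof -
  txt \<open>\<open>\<pi> h\<close> is the first latent index on the orbit of \<open>Inl h\<close> under \<open>\<sigma>\<close>, reached after one
    or two steps.\<close>
  define pre where "pre h = (if isl (\<sigma> (Inl h)) then Inl h else \<sigma> (Inl h))" for h
  have pre_latent: "\<exists>g. \<sigma> (pre h) = Inl g" for h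
  proof (cases "\<sigma> (Inl h)")
    case (Inr x)
    then have "\<sigma> (Inr x) \<noteq> Inr x" using match_eq_iff[of "Inr x" "Inl h"] by auto
    then show ?thesis using observed_match_cases[of x] Inr by (simp add: pre_def)
  qed (simp add: pre_def)
  define \<pi> where "\<pi> h = projl (\<sigma> (pre h))" for h
  have \<pi>: "\<sigma> (pre h) = Inl (\<pi> h)" for h
    using pre_latent[of h] by (auto simp: \<pi>_def)
  have "inj pre"
    by (rule injI) (auto simp: pre_def split: if_splits dest: sym)
  then have "inj \<pi>" using \<pi> by (metis injD injI match_eq_iff sum.inject(1))
  then have "bij \<pi>" using finite_UNIV_inj_surj[of \<pi>] by (simp add: bij_def)
  moreover have "C' (Inl (\<pi> h)) = C (Inl h)" for h
  proof (cases "isl (\<sigma> (Inl h))")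
    case True
    then show ?thesis using \<pi>[of h] column_support'_match[of "Inl h"] by (simp add: pre_def)
  next
    case False
    then obtain x where x: "\<sigma> (Inl h) = Inr x" by (cases "\<sigma> (Inl h)") auto
    then have "C' (Inl (\<pi> h)) = C (Inr x)"
      using \<pi>[of h] column_support'_match[of "Inr x"] by (simp add: pre_def)
    also have "\<dots> = C' (\<sigma> (Inl h))"
      using column_support'_observed_if_faithful'[OF faithful'] x by simp
    finally show ?thesis by simp
  qed
  ultimately show ?thesis by blast
qed

lemma aog_iso_if_faithful':
  assumes faithful': "ur_faithful A' B'"
  shows "\<exists>\<pi>. bij \<pi> \<and> ur_aog A' B' = (\<lambda>G. map_sum \<pi> id ` G) ` ur_aog A B"
proof -
  interpret c': ur_faithful_model A' B' using sem_ur' faithful' by unfold_locales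
  obtain \<pi> where \<pi>: "bij \<pi>" and C\<pi>: "\<And>h. C' (Inl (\<pi> h)) = C (Inl h)"
    using latent_relabelling_if_faithful'[OF faithful'] by blast
  have relabel: "\<pi> ` {h. P (C (Inl h))} = {g. P (C' (Inl g))}" for P
    using C\<pi> bij_pointE[OF \<pi>] by (auto simp: image_iff) metis
  have C'_obs: "C' (Inr i) = C (Inr i)" for i
    using column_support'_observed_if_faithful'[OF faithful'] .
  have group_relabel: "\<pi> ` {h. C (Inl h) = C (Inr i)} = {g. C' (Inl g) = C (Inr i)}" for i
    using relabel[of "\<lambda>S. S = C (Inr i)"] by simp
  let ?G = "\<lambda>i. insert (Inr i) (Inl ` {h. C (Inl h) = C (Inr i)})"
  let ?S = "{h. \<forall>i. C (Inl h) \<noteq> C (Inr i)}"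
  have "ur_aog A' B' = (\<lambda>i. insert (Inr i) (Inl ` \<pi> ` {h. C (Inl h) = C (Inr i)})) ` UNIV
      \<union> (\<lambda>h. {Inl h}) ` \<pi> ` ?S"
    unfolding c'.ur_aog_eq_column_support_classes C'_obs
    using relabel[of "\<lambda>S. \<forall>i. S \<noteq> C (Inr i)"] by (simp add: group_relabel)
  also have "\<dots> = (\<lambda>i. map_sum \<pi> id ` ?G i) ` UNIV \<union> (\<lambda>h. map_sum \<pi> id ` {Inl h}) ` ?S"
    by (simp add: image_image image_insert)
  also have "\<dots> = (\<lambda>G. map_sum \<pi> id ` G) ` ur_aog A B"
    unfolding ur_aog_eq_column_support_classes image_Un image_image ..
  finally show ?thesis using \<pi> by blast
qed

end

lemma ur_mix_equivalentI:
  assumes "sem_ur A" "ur_faithful A B" "sem_ur A'" "ur_mix_equiv A B A' B'"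
  shows "\<exists>\<sigma> l. ur_mix_equivalent A B A' B' \<sigma> l"
  using assms unfolding ur_mix_equiv_def ur_mix_equivalent_def ur_mix_equivalent_axioms_def
    ur_faithful_model_def by blast

lemma ur_aog_class_eq:
  assumes "sem_ur A" "ur_faithful A B"
  shows "ur_aog_class A B = {(A', B'). sem_ur A' \<and> ur_mix_equiv A B A' B' \<and> ur_faithful A' B'}"
proof (intro equalityI subsetI)
  fix AB' assume "AB' \<in> ur_aog_class A B"
  then obtain A' B' \<pi> where AB': "AB' = (A', B')" "sem_ur A'" "ur_mix_equiv A B A' B'" "bij \<pi>"
    "ur_aog A' B' = (\<lambda>G. map_sum \<pi> id ` G) ` ur_aog A B"
    by (auto simp: ur_aog_class_def)
  moreover obtain \<sigma> l where "ur_mix_equivalent A B A' B' \<sigma> l"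
    using ur_mix_equivalentI[OF assms AB'(2,3)] by blast
  ultimately show "AB' \<in> {(A', B'). sem_ur A' \<and> ur_mix_equiv A B A' B' \<and> ur_faithful A' B'}"
    using ur_mix_equivalent.faithful'_if_aog_iso by fastforce
next
  fix AB' assume "AB' \<in> {(A', B'). sem_ur A' \<and> ur_mix_equiv A B A' B' \<and> ur_faithful A' B'}"
  then obtain A' B' where
    AB': "AB' = (A', B')" "sem_ur A'" "ur_mix_equiv A B A' B'" "ur_faithful A' B'"
    by blast
  moreover obtain \<sigma> l where "ur_mix_equivalent A B A' B' \<sigma> l"
    using ur_mix_equivalentI[OF assms AB'(2,3)] by blast
  ultimately show "AB' \<in> ur_aog_class A B"
    using ur_mix_equivalent.aog_iso_if_faithful' by (fastforce simp: ur_aog_class_def)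
qed

theorem theorem2:
  shows "(\<forall>(p :: nat) (Z :: nat set) (c :: nat \<Rightarrow> nat \<Rightarrow> real).
            sem_me p Z c \<and> me_faithful p c \<longrightarrow>
              (\<forall>c' \<in> me_aog_class p Z c. me_faithful p c') \<and>
              (\<forall>c'. sem_me p Z c' \<and> me_mix_equiv p Z c c' \<and> me_faithful p c'
                     \<longrightarrow> c' \<in> me_aog_class p Z c) \<and>
              {c'. sem_me p Z c' \<and> me_mix_equiv p Z c c' \<and> me_faithful p c'} = me_aog_class p Z c)
       \<and> (\<forall>(A :: real^'x::finite^'x) (B :: real^'h::finite^'x).
            sem_ur A \<and> ur_faithful A B \<longrightarrow>
              (\<forall>(A', B') \<in> ur_aog_class A B. ur_faithful A' B') \<and>
              (\<forall>A' B'. sem_ur A' \<and> ur_mix_equiv A B A' B' \<and> ur_faithful A' B'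
                     \<longrightarrow> (A', B') \<in> ur_aog_class A B) \<and>
              {(A', B'). sem_ur A' \<and> ur_mix_equiv A B A' B' \<and> ur_faithful A' B'} = ur_aog_class A B)"
  by (auto simp: me_aog_class_eq ur_aog_class_eq)

end
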